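(* Let $\mathcal{A}$, $\mathcal{B}$ be ordered groups and $\mathcal{M}=\mathcal{A}\times\mathcal{B}$. Let $x_{12},x_{13},x_{14},x_{23},x_{24},x_{34}$ be independent symbols, let $\mathfrak{G}$ be the free abelian group on these six symbols, let $F$ be the field of fractions of the group algebra $\mathbb{Q}\mathfrak{G}$, and let $L=F\mathcal{M}$ be the group algebra of $\mathcal{M}$ over $F$. Let $$X=\begin{pmatrix}1&x_{12}&x_{13}&x_{14}\\0&1&x_{23}&x_{24}\\0&0&1&x_{34}\\0&0&0&1\end{pmatrix}$$ viewed as a matrix over $L$ (each $x_{ij}$ identified with $x_{ij}\cdot e$, $e$ the identity of $\mathcal{M}$). Let $a\in L$ with $a\neq 0$ and $a\neq 1$, and let $A=\mathrm{diag}(1,a,1,a)$, where $1$ is the unit of $L$. Then every entry $b_{ik}$ with $i\le k$ of the matrix $B=X^{-1}AX$ is non-zero.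
   Context: An ordered group is a group with a total order $>$ (exactly one of $x>y$, $y>x$, $x=y$; transitive) satisfying $x>y \Rightarrow axb>ayb$ for all $a,b$. The group algebra $K H$ of a group $H$ over a field $K$ consists of formal finite $K$-linear combinations of elements of $H$ with the usual operations. *)

theory Defs
  imports "HOL-Analysis.Analysis" "HOL-Library.Poly_Mapping" "HOL-Library.Product_Plus"
    "HOL-Library.Numeral_Type" "HOL-Computational_Algebra.Fraction_Field"
begin

definition ordered_group :: "'a::{group_add,linorder} itself \<Rightarrow> bool" where
  "ordered_group _ \<longleftrightarrow> (\<forall>x y a b :: 'a. x < y \<longrightarrow> a + x + b < a + y + b)"

datatype sym6 = X12 | X13 | X14 | X23 | X24 | X34

fun sym6_rank :: "sym6 \<Rightarrow> nat" where
  "sym6_rank X12 = 0" | "sym6_rank X13 = 1" | "sym6_rank X14 = 2"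
| "sym6_rank X23 = 3" | "sym6_rank X24 = 4" | "sym6_rank X34 = 5"

lemma sym6_rank_inj: "sym6_rank x = sym6_rank y \<Longrightarrow> x = y"
  by (cases x; cases y; simp)

instantiation sym6 :: linorder
begin
definition less_eq_sym6 :: "sym6 \<Rightarrow> sym6 \<Rightarrow> bool" where
  "less_eq_sym6 x y \<longleftrightarrow> sym6_rank x \<le> sym6_rank y"
definition less_sym6 :: "sym6 \<Rightarrow> sym6 \<Rightarrow> bool" where
  "less_sym6 x y \<longleftrightarrow> sym6_rank x < sym6_rank y"
instance
  by standard (auto simp: less_eq_sym6_def less_sym6_def intro: sym6_rank_inj)
end

type_synonym freeG = "sym6 \<Rightarrow>\<^sub>0 int"
type_synonym QG = "freeG \<Rightarrow>\<^sub>0 rat"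
type_synonym F = "QG fract"

definition xF :: "sym6 \<Rightarrow> F" where
  "xF s = Fract (Poly_Mapping.single (Poly_Mapping.single s 1) 1) 1"

definition xL :: "sym6 \<Rightarrow> ('m::monoid_add \<Rightarrow>\<^sub>0 F)" where
  "xL s = Poly_Mapping.single 0 (xF s)"

text \<open>Matrix indices 0,1,2,3 of type 4 correspond to 1,2,3,4 of the paper.\<close>
definition sym_of :: "4 \<Rightarrow> 4 \<Rightarrow> sym6" where
  "sym_of i j = (if i = 0 \<and> j = 1 then X12 else if i = 0 \<and> j = 2 then X13
     else if i = 0 \<and> j = 3 then X14 else if i = 1 \<and> j = 2 then X23
     else if i = 1 \<and> j = 3 then X24 else X34)"

definition Xmat :: "('m::monoid_add \<Rightarrow>\<^sub>0 F) ^ 4 ^ 4" where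
  "Xmat = (\<chi> i j. if i = j then 1 else if i < j then xL (sym_of i j) else 0)"

definition Amat :: "'r::semiring_1 \<Rightarrow> 'r ^ 4 ^ 4" where
  "Amat a = (\<chi> i j. if i = j then (if i = 1 \<or> i = 3 then a else 1) else 0)"

end

theory Submission
  imports Defs
begin

text \<open>Over the field \<open>F\<close> the unitriangular matrix \<open>X\<close> has an explicit inverse, and all
  entries of \<open>X\<close> and \<open>X\<^sup>-\<^sup>1\<close> lie in the copy \<open>F\<cdot>e\<close> of \<open>F\<close>, which is central in \<open>L\<close>.
  Writing \<open>A = 1 + (a - 1) diag(0,1,0,1)\<close>, every entry of \<open>X\<^sup>-\<^sup>1AX\<close> therefore has the form
  \<open>\<delta>\<^sub>i\<^sub>k + (a - 1) c\<^sub>i\<^sub>k\<close> with \<open>c\<^sub>i\<^sub>k \<in> F\<close>. On the diagonal \<open>c\<^sub>i\<^sub>k\<close> is \<open>0\<close> or \<open>1\<close>, giving the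
  entries \<open>1\<close> and \<open>a\<close>; above the diagonal \<open>c\<^sub>i\<^sub>k\<close> is a nonzero element of \<open>F\<close>, hence a
  unit of \<open>L\<close>, and \<open>a - 1 \<noteq> 0\<close>.\<close>

lemma UNIV_4_from_0: "(UNIV :: 4 set) = {0, 1, 2, 3}"
  using UNIV_4 by auto

lemma sum_UNIV_4_from_0: "sum f (UNIV :: 4 set) = f 0 + f 1 + f 2 + f 3"
  unfolding UNIV_4_from_0 by (simp add: ac_simps)

lemma forall_4_from_0: "(\<forall>i::4. P i) \<longleftrightarrow> P 0 \<and> P 1 \<and> P 2 \<and> P 3"
  by (metis UNIV_4_from_0 UNIV_I insert_iff empty_iff)

lemmas less_4_iff = less_bit0_def less_eq_bit0_def bit0.Rep_numeral bit0.Rep_0 bit0.Rep_1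

lemma lookup_mult_single_zero_right:
  fixes p :: "'m::monoid_add \<Rightarrow>\<^sub>0 'c::semiring_0"
  shows "Poly_Mapping.lookup (p * Poly_Mapping.single 0 c) k = Poly_Mapping.lookup p k * c"
proof -
  have "(\<lambda>q. if k = l + q then if q = 0 then c else 0 else 0)
      = (\<lambda>q. if q = 0 then (if k = l then c else 0) else 0)" for l
    by auto
  then have "(\<Sum>q. if k = l + q then if q = 0 then c else 0 else 0) = (if k = l then c else 0)" for l
    by (simp only:) simp
  then show ?thesis
    by (simp add: lookup_mult lookup_single when_def if_distrib[of "(*) _"] cong: if_cong)
qed

lemma single_zero_mult_commute:
  fixes p :: "'m::monoid_add \<Rightarrow>\<^sub>0 'c::comm_semiring_1"
  shows "Poly_Mapping.single 0 c * p = p * Poly_Mapping.single 0 c"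
  by (rule poly_mapping_eqI)
    (simp add: lookup_mult_single_zero_right mult_map_scale_conv_mult[symmetric] map.rep_eq
      when_def mult.commute)

lemma single_sum:
  "Poly_Mapping.single k (sum f S) = (\<Sum>x\<in>S. Poly_Mapping.single k (f x))"
  by (induction S rule: infinite_finite_induct) (simp_all add: single_add)

lemma mult_single_zero_neq_zero:
  fixes p :: "'m::monoid_add \<Rightarrow>\<^sub>0 'c::field"
  assumes "p \<noteq> 0" and "c \<noteq> 0"
  shows "p * Poly_Mapping.single 0 c \<noteq> 0"
proof
  assume "p * Poly_Mapping.single 0 c = 0"
  then have "p * (Poly_Mapping.single 0 c * Poly_Mapping.single 0 (inverse c)) = 0"
    by (simp add: mult.assoc[symmetric])
  with assms show False
    by (simp add: mult_single)
qed

definition scalar_matrix :: "'c ^ 'n ^ 'k \<Rightarrow> ('m::monoid_add \<Rightarrow>\<^sub>0 'c::semiring_1) ^ 'n ^ 'k" where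
  "scalar_matrix M = (\<chi> i j. Poly_Mapping.single 0 (M $ i $ j))"

lemma scalar_matrix_mult:
  "scalar_matrix (M ** N) = (scalar_matrix M ** scalar_matrix N :: ('m::monoid_add \<Rightarrow>\<^sub>0 'c::semiring_1) ^ _ ^ _)"
  by (simp add: scalar_matrix_def matrix_matrix_mult_def vec_eq_iff single_sum mult_single)

lemma scalar_matrix_mat_1: "scalar_matrix (mat 1) = (mat 1 :: ('m::monoid_add \<Rightarrow>\<^sub>0 'c::semiring_1) ^ 'n ^ 'n)"
  by (simp add: scalar_matrix_def mat_def vec_eq_iff)

lemma matrix_left_inverse_eq_right_inverse:
  fixes X :: "'a::semiring_1 ^ 'n ^ 'n"
  assumes "Y ** X = mat 1" and "X ** Z = mat 1"
  shows "Y = Z"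
  by (metis assms matrix_mul_assoc matrix_mul_lid matrix_mul_rid)

lemma scalar_conj_Amat_entry:
  fixes a :: "'m::monoid_add \<Rightarrow>\<^sub>0 'c::comm_ring_1" and Y X :: "'c ^ 4 ^ 4"
  shows "(scalar_matrix Y ** Amat a ** scalar_matrix X) $ i $ k
    = Poly_Mapping.single 0 ((Y ** X) $ i $ k)
      + (a - 1) * Poly_Mapping.single 0 (Y $ i $ 1 * X $ 1 $ k + Y $ i $ 3 * X $ 3 $ k)"
proof -
  have central: "Poly_Mapping.single 0 y * a * Poly_Mapping.single 0 x = a * Poly_Mapping.single 0 (y * x)"
    for x y :: 'c
    by (metis single_zero_mult_commute mult_single mult.assoc add_0)
  have "(scalar_matrix Y ** Amat a ** scalar_matrix X) $ i $ k
    = Poly_Mapping.single 0 (Y $ i $ 0) * Poly_Mapping.single 0 (X $ 0 $ k)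
      + Poly_Mapping.single 0 (Y $ i $ 1) * a * Poly_Mapping.single 0 (X $ 1 $ k)
      + Poly_Mapping.single 0 (Y $ i $ 2) * Poly_Mapping.single 0 (X $ 2 $ k)
      + Poly_Mapping.single 0 (Y $ i $ 3) * a * Poly_Mapping.single 0 (X $ 3 $ k)"
    by (simp add: scalar_matrix_def matrix_matrix_mult_def sum_UNIV_4_from_0 Amat_def)
  then show ?thesis
    unfolding central by (simp add: matrix_matrix_mult_def sum_UNIV_4_from_0 single_add
        mult_single algebra_simps)
qed

definition Xmat_F :: "F ^ 4 ^ 4" where
  "Xmat_F = (\<chi> i j. if i = j then 1 else if i < j then xF (sym_of i j) else 0)"

definition Xmat_F_inv :: "F ^ 4 ^ 4" where
  "Xmat_F_inv = (\<chi> i j. if i = j then 1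
     else if i = 0 \<and> j = 1 then - xF X12
     else if i = 0 \<and> j = 2 then xF X12 * xF X23 - xF X13
     else if i = 0 \<and> j = 3 then - xF X14 + xF X12 * xF X24 + xF X13 * xF X34 - xF X12 * xF X23 * xF X34
     else if i = 1 \<and> j = 2 then - xF X23
     else if i = 1 \<and> j = 3 then xF X23 * xF X34 - xF X24
     else if i = 2 \<and> j = 3 then - xF X34 else 0)"

lemma Xmat_eq_scalar_matrix: "Xmat = scalar_matrix Xmat_F"
  by (simp add: vec_eq_iff Xmat_def Xmat_F_def xL_def scalar_matrix_def)

lemma Xmat_F_mult_inv: "Xmat_F ** Xmat_F_inv = mat 1"
  by (simp add: vec_eq_iff forall_4_from_0 matrix_matrix_mult_def mat_def sum_UNIV_4_from_0
      Xmat_F_def Xmat_F_inv_def less_4_iff sym_of_def algebra_simps)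

lemma Xmat_F_inv_mult: "Xmat_F_inv ** Xmat_F = mat 1"
  by (simp add: vec_eq_iff forall_4_from_0 matrix_matrix_mult_def mat_def sum_UNIV_4_from_0
      Xmat_F_def Xmat_F_inv_def less_4_iff sym_of_def algebra_simps)

lemma Fract_1_eq_zero_iff: "Fract p 1 = 0 \<longleftrightarrow> p = 0"
  by (simp add: Zero_fract_def eq_fract)

lemma xF_neq_zero: "xF s \<noteq> 0"
  unfolding xF_def Fract_1_eq_zero_iff by (metis lookup_single_eq lookup_zero zero_neq_one)

lemma corner_coeff_neq_zero: "- xF X14 + xF X13 * xF X34 - xF X12 * xF X23 * xF X34 \<noteq> 0"
proof -
  define m :: "sym6 \<Rightarrow> sym6 \<Rightarrow>\<^sub>0 int" where "m s = Poly_Mapping.single s 1" for s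
  define P :: QG where "P = - Poly_Mapping.single (m X14) 1 + Poly_Mapping.single (m X13 + m X34) 1
     - Poly_Mapping.single (m X12 + m X23 + m X34) 1"
  have "- xF X14 + xF X13 * xF X34 - xF X12 * xF X23 * xF X34 = Fract P 1"
    by (simp add: P_def m_def xF_def mult_single)
  moreover
  have "m X13 + m X34 \<noteq> m X14" "m X12 + m X23 + m X34 \<noteq> m X14"
    by (metis lookup_add lookup_single_eq lookup_single_not_eq m_def sym6.distinct add_0 zero_neq_one)+
  then have "Poly_Mapping.lookup P (m X14) = -1"
    by (simp add: P_def lookup_add lookup_minus lookup_single)
  then have "P \<noteq> 0" by auto
  ultimately show ?thesis by (simp add: Fract_1_eq_zero_iff)
qed

definition conj_coeff :: "4 \<Rightarrow> 4 \<Rightarrow> F" where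
  "conj_coeff i k = Xmat_F_inv $ i $ 1 * Xmat_F $ 1 $ k + Xmat_F_inv $ i $ 3 * Xmat_F $ 3 $ k"

lemma conj_coeff_diagonal:
  "conj_coeff 0 0 = 0" "conj_coeff 1 1 = 1" "conj_coeff 2 2 = 0" "conj_coeff 3 3 = 1"
  by (simp_all add: conj_coeff_def Xmat_F_def Xmat_F_inv_def less_4_iff)

lemma conj_coeff_upper_neq_zero:
  "conj_coeff 0 1 \<noteq> 0" "conj_coeff 0 2 \<noteq> 0" "conj_coeff 0 3 \<noteq> 0"
  "conj_coeff 1 2 \<noteq> 0" "conj_coeff 1 3 \<noteq> 0" "conj_coeff 2 3 \<noteq> 0"
proof -
  have "conj_coeff 0 3 = - xF X14 + xF X13 * xF X34 - xF X12 * xF X23 * xF X34"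
    by (simp add: conj_coeff_def Xmat_F_def Xmat_F_inv_def less_4_iff sym_of_def algebra_simps)
  then show "conj_coeff 0 3 \<noteq> 0"
    using corner_coeff_neq_zero by simp
  show "conj_coeff 0 1 \<noteq> 0" "conj_coeff 0 2 \<noteq> 0"
    "conj_coeff 1 2 \<noteq> 0" "conj_coeff 1 3 \<noteq> 0" "conj_coeff 2 3 \<noteq> 0"
    by (simp_all add: conj_coeff_def Xmat_F_def Xmat_F_inv_def less_4_iff sym_of_def xF_neq_zero)
qed

theorem lemma4:
  fixes a :: "('a::{group_add,linorder} \<times> 'b::{group_add,linorder}) \<Rightarrow>\<^sub>0 F"
    and Y :: "(('a \<times> 'b) \<Rightarrow>\<^sub>0 F) ^ 4 ^ 4"
  assumes "ordered_group TYPE('a)" and "ordered_group TYPE('b)"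
    and "a \<noteq> 0" and "a \<noteq> 1"
    and "Y ** Xmat = mat 1" and "Xmat ** Y = mat 1"
  shows "\<forall>i k. i \<le> k \<longrightarrow> (Y ** Amat a ** Xmat) $ i $ k \<noteq> 0"
proof -
  have "Xmat ** scalar_matrix Xmat_F_inv = (mat 1 :: (('a \<times> 'b) \<Rightarrow>\<^sub>0 F) ^ 4 ^ 4)"
    by (simp add: Xmat_eq_scalar_matrix scalar_matrix_mult[symmetric] Xmat_F_mult_inv scalar_matrix_mat_1)
  with assms(5) have Y: "Y = scalar_matrix Xmat_F_inv"
    by (rule matrix_left_inverse_eq_right_inverse)
  have entry: "(Y ** Amat a ** Xmat) $ i $ k
      = Poly_Mapping.single 0 (if i = k then 1 else 0) + (a - 1) * Poly_Mapping.single 0 (conj_coeff i k)"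
    for i k
    by (simp add: Y Xmat_eq_scalar_matrix scalar_conj_Amat_entry Xmat_F_inv_mult conj_coeff_def mat_def)
  have "(a - 1) * Poly_Mapping.single 0 c \<noteq> 0" if "c \<noteq> 0" for c
    using assms(4) that by (simp add: mult_single_zero_neq_zero)
  then show ?thesis
    unfolding forall_4_from_0 entry
    by (simp add: less_4_iff conj_coeff_diagonal conj_coeff_upper_neq_zero assms(3))
qed

end
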